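(* For all formulas $\varphi,\psi$: $\varphi,\varphi^{*}\vdash_{\mathsf{NeL}+\{\mathrm{(DI)}^s\}}\psi$.
   Context: Formulas are built from a countably infinite set of variables using binary $\otimes,\circ$ and unary ${}^{*}$. Abbreviations: $\varphi\Rightarrow\psi:=(\varphi\circ\psi^{*})^{*}$; $\varphi\Leftrightarrow\psi:=(\varphi\Rightarrow\psi)\otimes(\psi\Rightarrow\varphi)$; $\varphi\not\Leftrightarrow\psi:=(\varphi\Leftrightarrow\psi)^{*}$; $\varphi\not\Leftrightarrow\psi\not\Leftrightarrow\chi:=((\varphi\not\Leftrightarrow\psi)\otimes(\varphi\not\Leftrightarrow\chi))\otimes(\psi\not\Leftrightarrow\chi)$; $\varphi\oplus\psi:=(\varphi^{*}\otimes\psi^{*})^{*}$. $\mathsf{NeL}$: axiom schemes (A1) $\varphi\Rightarrow\varphi$; (A2) $(\varphi\circ\psi)\Rightarrow(\psi\circ\varphi)$; (A3) $\varphi\Rightarrow\varphi^{**}$; (A4) $(\varphi\Rightarrow\psi)\Rightarrow(\varphi\circ\psi)$; (A5) $(\varphi\otimes\psi)\Leftrightarrow(\psi\otimes\varphi)$; (A6) $((\varphi\otimes\psi)\Rightarrow\chi)\Rightarrow((\varphi\otimes\chi^{*})\Rightarrow\psi^{*})$; (A7) $(\varphi\not\Leftrightarrow\psi\not\Leftrightarrow\chi)\Rightarrow((\varphi\Rightarrow\psi)\Rightarrow((\psi\Rightarrow\chi)\Rightarrow(\varphi\Rightarrow\chi)))$; rules on arbitrary formulas: $\varphi\Rightarrow\psi,\varphi/\psi$;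 $\varphi,\psi/\varphi\otimes\psi$; $\varphi\Leftrightarrow\psi,\chi/\chi'$ ($\chi'$ from $\chi$ replacing one or more occurrences of $\varphi$ by $\psi$); $\varphi\otimes\psi/\varphi$. $\Gamma\vdash\varphi$ means derivability from $\Gamma$ and axiom instances. $\mathsf{NeL}+\{\mathrm{(DI)}^s\}$ adds the rule $\varphi/\varphi\oplus\psi$. *)

theory Defs
  imports Main
begin

datatype fm = Var nat | Otimes fm fm | Circ fm fm | Star fm

definition Imp :: "fm \<Rightarrow> fm \<Rightarrow> fm" where
  "Imp a b = Star (Circ a (Star b))"

definition Iff :: "fm \<Rightarrow> fm \<Rightarrow> fm" where
  "Iff a b = Otimes (Imp a b) (Imp b a)"

definition NIff :: "fm \<Rightarrow> fm \<Rightarrow> fm" where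
  "NIff a b = Star (Iff a b)"

definition NIff3 :: "fm \<Rightarrow> fm \<Rightarrow> fm \<Rightarrow> fm" where
  "NIff3 a b c = Otimes (Otimes (NIff a b) (NIff a c)) (NIff b c)"

definition Oplus :: "fm \<Rightarrow> fm \<Rightarrow> fm" where
  "Oplus a b = Star (Otimes (Star a) (Star b))"

inductive axiom :: "fm \<Rightarrow> bool" where
  A1: "axiom (Imp a a)"
| A2: "axiom (Imp (Circ a b) (Circ b a))"
| A3: "axiom (Imp a (Star (Star a)))"
| A4: "axiom (Imp (Imp a b) (Circ a b))"
| A5: "axiom (Iff (Otimes a b) (Otimes b a))"
| A6: "axiom (Imp (Imp (Otimes a b) c) (Imp (Otimes a (Star c)) (Star b)))"
| A7: "axiom (Imp (NIff3 a b c) (Imp (Imp a b) (Imp (Imp b c) (Imp a c))))"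

text \<open>\<open>repl0 a b x y\<close>: y arises from x by replacing zero or more occurrences
  of a by b; \<open>repl1\<close>: one or more occurrences.\<close>
inductive repl0 :: "fm \<Rightarrow> fm \<Rightarrow> fm \<Rightarrow> fm \<Rightarrow> bool" for a b where
  r0_refl: "repl0 a b x x"
| r0_here: "repl0 a b a b"
| r0_ot: "repl0 a b x x' \<Longrightarrow> repl0 a b y y' \<Longrightarrow> repl0 a b (Otimes x y) (Otimes x' y')"
| r0_ci: "repl0 a b x x' \<Longrightarrow> repl0 a b y y' \<Longrightarrow> repl0 a b (Circ x y) (Circ x' y')"
| r0_st: "repl0 a b x x' \<Longrightarrow> repl0 a b (Star x) (Star x')"

inductive repl1 :: "fm \<Rightarrow> fm \<Rightarrow> fm \<Rightarrow> fm \<Rightarrow> bool" for a b where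
  r1_here: "repl1 a b a b"
| r1_otl: "repl1 a b x x' \<Longrightarrow> repl0 a b y y' \<Longrightarrow> repl1 a b (Otimes x y) (Otimes x' y')"
| r1_otr: "repl0 a b x x' \<Longrightarrow> repl1 a b y y' \<Longrightarrow> repl1 a b (Otimes x y) (Otimes x' y')"
| r1_cil: "repl1 a b x x' \<Longrightarrow> repl0 a b y y' \<Longrightarrow> repl1 a b (Circ x y) (Circ x' y')"
| r1_cir: "repl0 a b x x' \<Longrightarrow> repl1 a b y y' \<Longrightarrow> repl1 a b (Circ x y) (Circ x' y')"
| r1_st: "repl1 a b x x' \<Longrightarrow> repl1 a b (Star x) (Star x')"

text \<open>Derivability in NeL from hypotheses \<open>\<Gamma>\<close>; if \<open>di\<close> is True the
  rule (DI)^s  \<open>\<phi> / \<phi> \<oplus> \<psi>\<close> is added.\<close>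
inductive derivable :: "bool \<Rightarrow> fm set \<Rightarrow> fm \<Rightarrow> bool" for di \<Gamma> where
  hyp: "a \<in> \<Gamma> \<Longrightarrow> derivable di \<Gamma> a"
| ax: "axiom a \<Longrightarrow> derivable di \<Gamma> a"
| mp: "derivable di \<Gamma> (Imp a b) \<Longrightarrow> derivable di \<Gamma> a \<Longrightarrow> derivable di \<Gamma> b"
| adj: "derivable di \<Gamma> a \<Longrightarrow> derivable di \<Gamma> b \<Longrightarrow> derivable di \<Gamma> (Otimes a b)"
| subst: "derivable di \<Gamma> (Iff a b) \<Longrightarrow> derivable di \<Gamma> c \<Longrightarrow> repl1 a b c c'
          \<Longrightarrow> derivable di \<Gamma> c'"
| simp: "derivable di \<Gamma> (Otimes a b) \<Longrightarrow> derivable di \<Gamma> a"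
| DI: "di \<Longrightarrow> derivable di \<Gamma> a \<Longrightarrow> derivable di \<Gamma> (Oplus a b)"

abbreviation derivable_NeL_DI :: "fm set \<Rightarrow> fm \<Rightarrow> bool" where
  "derivable_NeL_DI \<Gamma> a \<equiv> derivable True \<Gamma> a"

end

theory Submission
  imports Defs
begin

text \<open>From \<open>\<phi>\<close> and \<open>\<phi>\<^sup>*\<close> every starred formula is derivable: (DI) turns \<open>\<phi>\<close> into
  \<open>(\<phi>\<^sup>* \<otimes> \<psi>\<^sup>*)\<^sup>*\<close>, and axiom (A6), used as a contraposition rule, then yields \<open>\<psi>\<^sup>*\<^sup>*\<close>; a
  second application of (A6) with (A3) removes the surplus star. Since
  \<open>\<phi> \<Rightarrow> \<psi>\<close> is itself a starred formula, modus ponens gives \<open>\<psi>\<close>.\<close>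

lemma derivable_A6_contrapose:
  assumes "derivable di \<Gamma> (Imp (Otimes a b) c)"
    and "derivable di \<Gamma> a" and "derivable di \<Gamma> (Star c)"
  shows "derivable di \<Gamma> (Star b)"
proof -
  have "derivable di \<Gamma> (Imp (Otimes a (Star c)) (Star b))"
    using derivable.mp[OF derivable.ax[OF axiom.A6] assms(1)] .
  then show ?thesis
    using derivable.mp derivable.adj assms(2,3) by blast
qed

lemma derivable_Star_Star_if_contradictory:
  assumes "derivable True \<Gamma> p" and "derivable True \<Gamma> (Star p)"
  shows "derivable True \<Gamma> (Star (Star b))"
proof (rule derivable_A6_contrapose)
  show "derivable True \<Gamma> (Imp (Otimes (Star p) (Star b)) (Otimes (Star p) (Star b)))"
    by (intro derivable.ax axiom.A1)
  show "derivable True \<Gamma> (Star (Otimes (Star p) (Star b)))"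
    using derivable.DI[OF _ assms(1), of b] by (simp add: Oplus_def)
qed (use assms(2) in simp)

lemma derivable_Star_if_contradictory:
  assumes "derivable True \<Gamma> p" and "derivable True \<Gamma> (Star p)"
  shows "derivable True \<Gamma> (Star b)"
proof (rule derivable_A6_contrapose)
  show "derivable True \<Gamma> (Imp (Otimes p b) (Star (Star (Otimes p b))))"
    by (intro derivable.ax axiom.A3)
  show "derivable True \<Gamma> (Star (Star (Star (Otimes p b))))"
    using derivable_Star_Star_if_contradictory[OF assms] .
qed (use assms(1) in simp)

theorem proposition5p13:
  shows "derivable_NeL_DI {\<phi>, Star \<phi>} \<psi>"
proof -
  have \<phi>: "derivable True {\<phi>, Star \<phi>} \<phi>"
    and \<phi>_Star: "derivable True {\<phi>, Star \<phi>} (Star \<phi>)"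
    by (simp_all add: derivable.hyp)
  have "derivable True {\<phi>, Star \<phi>} (Imp \<phi> \<psi>)"
    unfolding Imp_def using derivable_Star_if_contradictory[OF \<phi> \<phi>_Star] .
  then show ?thesis
    using derivable.mp \<phi> by blast
qed

end
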